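(* An exceptional graph has no cycle whose length is divisible by $3$.
   Context: All graphs are finite and simple. Let $r$ be a degree-$2$ vertex of a graph $G$. $G$ is an exceptional graph with root $r$ if there is a sequence $(G_0,x_0,y_0),\ldots,(G_n,x_n,y_n)$, $n\ge 0$, with $G_0=K_{2,3}$, $G_n=G$, such that for each $i$ the vertices $r,x_i,y_i$ are distinct degree-$2$ vertices of $G_i$, and for each $i<n$: (1) if $x_iy_i\notin E(G_i)$, $G_{i+1}$ is obtained from $G_i$ by adding a new path of length $3$ joining $x_i$ and $y_i$; (2) if $x_iy_i\in E(G_i)$, $G_{i+1}$ is obtained from $G_i$ either by adding a new vertex $v$ with $N_{G_{i+1}}(v)=N_{G_i}(w)$ for some $w\in\{x_i,y_i\}$, or by adding a new $4$-cycle $abcda$ and the edges $ax_i,cy_i$. A graph is exceptional if it is an exceptional graph with some root. *)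

theory Defs
  imports Main
begin

definition simple_graph :: "'a set \<Rightarrow> 'a set set \<Rightarrow> bool" where
  "simple_graph V E \<longleftrightarrow> finite V \<and> (\<forall>e\<in>E. \<exists>u v. e = {u, v} \<and> u \<noteq> v \<and> u \<in> V \<and> v \<in> V)"

definition nbrs :: "'a set set \<Rightarrow> 'a \<Rightarrow> 'a set" where
  "nbrs E v = {u. {v, u} \<in> E}"

definition degree :: "'a set set \<Rightarrow> 'a \<Rightarrow> nat" where
  "degree E v = card (nbrs E v)"

definition K23_edges :: "'a \<Rightarrow> 'a \<Rightarrow> 'a \<Rightarrow> 'a \<Rightarrow> 'a \<Rightarrow> 'a set set" where
  "K23_edges a1 a2 b1 b2 b3 =
     {{a1, b1}, {a1, b2}, {a1, b3}, {a2, b1}, {a2, b2}, {a2, b3}}"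

text \<open>exc_seq V E r: (V,E) is the last graph G_n of a sequence as in the definition,
  where the conditions on (x_i, y_i) for i < n have been checked at each step.\<close>
inductive exc_seq :: "'a set \<Rightarrow> 'a set set \<Rightarrow> 'a \<Rightarrow> bool" where
  base: "distinct [a1, a2, b1, b2, b3] \<Longrightarrow>
    exc_seq {a1, a2, b1, b2, b3} (K23_edges a1 a2 b1 b2 b3) r"
| path3: "\<lbrakk> exc_seq V E r; r \<in> V; x \<in> V; y \<in> V; distinct [r, x, y];
      degree E r = 2; degree E x = 2; degree E y = 2;
      {x, y} \<notin> E; a \<notin> V; b \<notin> V; a \<noteq> b \<rbrakk> \<Longrightarrow>
    exc_seq (V \<union> {a, b}) (E \<union> {{x, a}, {a, b}, {b, y}}) r"
| twin: "\<lbrakk> exc_seq V E r; r \<in> V; x \<in> V; y \<in> V; distinct [r, x, y];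
      degree E r = 2; degree E x = 2; degree E y = 2;
      {x, y} \<in> E; w \<in> {x, y}; v \<notin> V \<rbrakk> \<Longrightarrow>
    exc_seq (insert v V) (E \<union> {{v, u} | u. u \<in> nbrs E w}) r"
| cycle4: "\<lbrakk> exc_seq V E r; r \<in> V; x \<in> V; y \<in> V; distinct [r, x, y];
      degree E r = 2; degree E x = 2; degree E y = 2;
      {x, y} \<in> E; distinct [a, b, c, d]; a \<notin> V; b \<notin> V; c \<notin> V; d \<notin> V \<rbrakk> \<Longrightarrow>
    exc_seq (V \<union> {a, b, c, d})
      (E \<union> {{a, b}, {b, c}, {c, d}, {d, a}, {a, x}, {c, y}}) r"

text \<open>The final graph G_n must also contain distinct degree-2 vertices r, x_n, y_n.\<close>
definition exceptional_root :: "'a set \<Rightarrow> 'a set set \<Rightarrow> 'a \<Rightarrow> bool" where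
  "exceptional_root V E r \<longleftrightarrow> exc_seq V E r \<and> r \<in> V \<and> degree E r = 2 \<and>
     (\<exists>x y. x \<in> V \<and> y \<in> V \<and> distinct [r, x, y] \<and> degree E x = 2 \<and> degree E y = 2)"

definition exceptional :: "'a set \<Rightarrow> 'a set set \<Rightarrow> bool" where
  "exceptional V E \<longleftrightarrow> (\<exists>r. exceptional_root V E r)"

definition is_cycle :: "'a set \<Rightarrow> 'a set set \<Rightarrow> 'a list \<Rightarrow> bool" where
  "is_cycle V E cs \<longleftrightarrow> length cs \<ge> 3 \<and> distinct cs \<and> set cs \<subseteq> V \<and>
     (\<forall>i < length cs. {cs ! i, cs ! ((i + 1) mod length cs)} \<in> E)"

end

theory Submission
  imports Defs
begin

text \<open>
  The proof is an induction along the construction sequence with a stronger invariant: the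
  graph is simple with minimum degree 2, no cycle has length divisible by 3, and apart from
  the root there are exactly two vertices s, t of degree 2 (the only candidates for the next
  x_i, y_i) such that, if s and t are not adjacent, no s--t path has a number of edges
  divisible by 3.

  For K_{2,3} this holds because the graph is bipartite with 5 vertices. Each step glues a
  gadget onto x and y. A new cycle either stays inside a small part of the gadget, where it
  has length 4, or consists of a path through the gadget and an old x--y path Q. If x and y
  are not adjacent, the path condition controls the length of Q; if they are, Q closed by the
  edge xy is an old cycle. The new vertex of a twin step has the same two neighbours as its
  twin, and a cycle avoiding the twin becomes an old cycle once the two are identified.
\<close>

abbreviation walk :: "'a set set \<Rightarrow> 'a list \<Rightarrow> bool" where
  "walk E \<equiv> successively (\<lambda>u w. {u, w} \<in> E)"

definition is_path :: "'a set \<Rightarrow> 'a set set \<Rightarrow> 'a list \<Rightarrow> bool" where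
  "is_path V E P \<longleftrightarrow> P \<noteq> [] \<and> distinct P \<and> set P \<subseteq> V \<and> walk E P"

lemma nbrs_iff [simp]: "u \<in> nbrs E v \<longleftrightarrow> {v, u} \<in> E"
  by (simp add: nbrs_def)

lemma distinct_hd_eq_last: "distinct xs \<Longrightarrow> xs \<noteq> [] \<Longrightarrow> hd xs = last xs \<Longrightarrow> xs = [hd xs]"
  by (metis distinct.simps(2) last_in_set last_tl list.exhaust_sel)

lemma is_path_rev [simp]: "is_path V E (rev P) \<longleftrightarrow> is_path V E P"
  by (simp add: is_path_def insert_commute)

lemma is_path_Cons:
  "is_path V E (u # P) \<longleftrightarrow> u \<in> V \<and> (P = [] \<or> is_path V E P \<and> u \<notin> set P \<and> {u, hd P} \<in> E)"
  by (auto simp: is_path_def successively_Cons)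

lemma is_path_Cons_Cons_edge: "is_path V E (u # w # P) \<Longrightarrow> {u, w} \<in> E"
  by (simp add: is_path_Cons)

lemma is_path_append:
  assumes "P \<noteq> []" "Q \<noteq> []"
  shows "is_path V E (P @ Q) \<longleftrightarrow>
    is_path V E P \<and> is_path V E Q \<and> set P \<inter> set Q = {} \<and> {last P, hd Q} \<in> E"
  using assms by (auto simp: is_path_def successively_append_iff)

lemma is_cycle_iff:
  "is_cycle V E cs \<longleftrightarrow> 3 \<le> length cs \<and> is_path V E cs \<and> {last cs, hd cs} \<in> E"
proof (cases "3 \<le> length cs")
  case True
  let ?n = "length cs"
  have n: "Suc (?n - 1) = ?n" "cs \<noteq> []" using True by auto
  have "(\<forall>i < ?n. {cs ! i, cs ! ((i + 1) mod ?n)} \<in> E) \<longleftrightarrow>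
      (\<forall>i. Suc i < ?n \<longrightarrow> {cs ! i, cs ! Suc i} \<in> E) \<and> {cs ! (?n - 1), cs ! 0} \<in> E"
    (is "?all \<longleftrightarrow> ?walk \<and> ?close")
  proof
    assume all: ?all
    have ?close using all[rule_format, of "?n - 1"] n by simp
    moreover have ?walk
    proof (intro allI impI)
      fix i assume "Suc i < ?n"
      then show "{cs ! i, cs ! Suc i} \<in> E" using all[rule_format, of i] by simp
    qed
    ultimately show "?walk \<and> ?close" by blast
  next
    assume walk_close: "?walk \<and> ?close"
    show ?all
    proof (intro allI impI)
      fix i assume "i < ?n"
      then consider "Suc i < ?n" | "i = ?n - 1" by linarith
      then show "{cs ! i, cs ! ((i + 1) mod ?n)} \<in> E"
        by cases (use walk_close n in auto)
    qed
  qed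
  then show ?thesis
    using True n by (auto simp: is_cycle_def is_path_def successively_conv_nth hd_conv_nth last_conv_nth)
qed (simp add: is_cycle_def)

lemma is_cycle_Cons_iff:
  "is_cycle V E (v # R) \<longleftrightarrow>
    v \<in> V \<and> v \<notin> set R \<and> is_path V E R \<and> 2 \<le> length R \<and> {v, hd R} \<in> E \<and> {last R, v} \<in> E"
  by (cases R) (auto simp: is_cycle_iff is_path_Cons)

lemma is_cycle_rotate: "is_cycle V E (xs @ ys) \<Longrightarrow> is_cycle V E (ys @ xs)"
  by (cases "xs = []"; cases "ys = []")
    (auto simp: is_cycle_iff is_path_append insert_commute Int_commute)

lemma is_cycle_through:
  assumes "is_cycle V E cs" "v \<in> set cs"
  obtains R where "is_path V E R" "v \<notin> set R" "hd R \<in> nbrs E v" "last R \<in> nbrs E v"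
    "hd R \<noteq> last R" "set cs = insert v (set R)" "length cs = Suc (length R)"
proof -
  obtain xs ys where cs: "cs = xs @ v # ys" using split_list[OF assms(2)] by blast
  define R where "R = ys @ xs"
  have "is_cycle V E (v # R)" using is_cycle_rotate[of V E xs "v # ys"] assms(1) cs R_def by simp
  then have R: "is_path V E R" "v \<notin> set R" "2 \<le> length R" "{v, hd R} \<in> E" "{last R, v} \<in> E"
    by (auto simp: is_cycle_Cons_iff)
  have "hd R \<noteq> last R"
  proof
    assume "hd R = last R"
    then have "R = [hd R]" using distinct_hd_eq_last R(1) unfolding is_path_def by blast
    then have "length R = 1" by (metis One_nat_def length_Cons list.size(3))
    then show False using R(3) by simp
  qed
  moreover have "set cs = insert v (set R)" "length cs = Suc (length R)" using cs R_def by auto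
  ultimately show thesis using that R by (simp add: insert_commute)
qed

lemma is_cycle_through_degree2:
  assumes "is_cycle V E cs" "v \<in> set cs" "nbrs E v = {p, q}"
  obtains R where "is_path V E R" "v \<notin> set R" "hd R = p" "last R = q"
    "set cs = insert v (set R)" "length cs = Suc (length R)"
proof -
  obtain R where R: "is_path V E R" "v \<notin> set R" "hd R \<in> {p, q}" "last R \<in> {p, q}"
    "hd R \<noteq> last R" "set cs = insert v (set R)" "length cs = Suc (length R)"
    using is_cycle_through[OF assms(1,2)] assms(3) by metis
  then have "R \<noteq> []" by (auto simp: is_path_def)
  show thesis
  proof (cases "hd R = p")
    case True
    then show thesis using that R by auto
  next
    case False
    then show thesis using that[of "rev R"] R \<open>R \<noteq> []\<close> by (auto simp: hd_rev last_rev)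
  qed
qed

lemma is_path_restrict:
  assumes "is_path V' (E \<union> F) P" "set P \<subseteq> V" "\<forall>e\<in>F. \<not> e \<subseteq> V"
  shows "is_path V E P"
proof -
  have "walk (E \<union> F) P" using assms(1) by (simp add: is_path_def)
  then have "walk E P"
    by (rule successively_mono) (use assms(2,3) in auto)
  then show ?thesis using assms(1,2) by (simp add: is_path_def)
qed

lemma is_cycle_restrict:
  assumes "is_cycle V' (E \<union> F) cs" "set cs \<subseteq> V" "\<forall>e\<in>F. \<not> e \<subseteq> V"
  shows "is_cycle V E cs"
proof -
  have "cs \<noteq> []" using assms(1) by (auto simp: is_cycle_iff is_path_def)
  then have "{last cs, hd cs} \<subseteq> V" using assms(2) by auto
  then show ?thesis using assms is_path_restrict by (fastforce simp: is_cycle_iff)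
qed

lemma is_cycle_map:
  assumes "is_cycle V E cs" "inj_on f (set cs)" "f ` set cs \<subseteq> V'"
    "\<And>u w. u \<in> set cs \<Longrightarrow> w \<in> set cs \<Longrightarrow> {u, w} \<in> E \<Longrightarrow> {f u, f w} \<in> E'"
  shows "is_cycle V' E' (map f cs)"
proof -
  have cs: "3 \<le> length cs" "cs \<noteq> []" "distinct cs" "walk E cs" "{last cs, hd cs} \<in> E"
    using assms(1) by (auto simp: is_cycle_iff is_path_def)
  have "walk E' (map f cs)"
    unfolding successively_map using cs(4) assms(4) by (rule successively_mono) auto
  then show ?thesis
    using cs assms(2-4) by (simp add: is_cycle_iff is_path_def distinct_map hd_map last_map)
qed

lemma walk_bipartite_parity:
  assumes "walk E xs" "xs \<noteq> []" "\<forall>e\<in>E. \<exists>u w. e = {u, w} \<and> u \<in> A \<and> w \<notin> A"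
  shows "last xs \<in> A \<longleftrightarrow> (hd xs \<in> A \<longleftrightarrow> odd (length xs))"
  using assms(1,2)
proof (induction xs rule: induct_list012)
  case (3 u w xs)
  have "{u, w} \<in> E" "walk E (w # xs)" using "3.prems"(1) by simp_all
  then have "u \<in> A \<longleftrightarrow> w \<notin> A"
    and "last (w # xs) \<in> A \<longleftrightarrow> (w \<in> A \<longleftrightarrow> odd (length (w # xs)))"
    using assms(3) "3.IH"(2) by (fastforce simp: doubleton_eq_iff)+
  then show ?case by simp
qed simp_all

lemma simple_graph_edge: "simple_graph V E \<Longrightarrow> {u, w} \<in> E \<Longrightarrow> u \<in> V \<and> w \<in> V \<and> u \<noteq> w"
  unfolding simple_graph_def by (metis doubleton_eq_iff)

lemma simple_graph_nbrsD: "simple_graph V E \<Longrightarrow> u \<in> nbrs E w \<Longrightarrow> u \<in> V \<and> w \<in> V \<and> u \<noteq> w"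
  using simple_graph_edge[of V E w u] by auto

lemma simple_graph_nbrs_subset: "simple_graph V E \<Longrightarrow> nbrs E u \<subseteq> V"
  using simple_graph_edge by fastforce

lemma simple_graph_finite_nbrs: "simple_graph V E \<Longrightarrow> finite (nbrs E u)"
  using simple_graph_nbrs_subset finite_subset unfolding simple_graph_def by metis

lemma simple_graph_nbrs_outside: "simple_graph V E \<Longrightarrow> u \<notin> V \<Longrightarrow> nbrs E u = {}"
  using simple_graph_edge by fastforce

lemma is_cycle_twins_length:
  assumes simple: "simple_graph V E" and cs: "is_cycle V E cs"
    and vw: "v \<in> set cs" "w \<in> set cs" "v \<noteq> w"
    and nbrs: "nbrs E v = {p, q}" "nbrs E w = {p, q}"
  shows "length cs = 4"
proof -
  obtain R where R: "is_path V E R" "hd R = p" "last R = q"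
    "set cs = insert w (set R)" "length cs = Suc (length R)"
    using is_cycle_through_degree2[OF cs vw(2) nbrs(2)] by metis
  have pq: "p \<noteq> v" "q \<noteq> v" using simple_graph_nbrsD[OF simple] nbrs(1) by blast+
  have "v \<in> set R" using R(4) vw by auto
  then obtain R1 R2 where split: "R = R1 @ v # R2" using split_list by metis
  have "R1 \<noteq> []" "R2 \<noteq> []" using R(2,3) pq split by auto
  have "is_path V E (R1 @ v # R2)" using R(1) split by simp
  then have R1: "is_path V E R1" "set R1 \<inter> set (v # R2) = {}" "last R1 \<in> nbrs E v"
    and "is_path V E (v # R2)"
    using is_path_append[OF \<open>R1 \<noteq> []\<close>, of "v # R2"] by (simp_all add: insert_commute)
  then have R2: "is_path V E R2" "hd R2 \<in> nbrs E v"
    using \<open>R2 \<noteq> []\<close> by (simp_all add: is_path_Cons)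
  have "hd R1 = p" "last R2 = q" using R(2,3) split \<open>R1 \<noteq> []\<close> \<open>R2 \<noteq> []\<close> by auto
  then have "p \<in> set R1" "q \<in> set R2" "last R1 \<in> set R1" "hd R2 \<in> set R2"
    using \<open>R1 \<noteq> []\<close> \<open>R2 \<noteq> []\<close> by auto
  then have "last R1 = hd R1" "hd R2 = last R2"
    using R1(2,3) R2(2) nbrs(1) \<open>hd R1 = p\<close> \<open>last R2 = q\<close> by auto
  then have "R1 = [p]" "R2 = [q]"
    using distinct_hd_eq_last R1(1) R2(1) \<open>hd R1 = p\<close> \<open>last R2 = q\<close>
    unfolding is_path_def by metis+
  then show ?thesis using R(5) split by simp
qed

lemma nbrs_empty [simp]: "nbrs {} u = {}"
  by (simp add: nbrs_def)

lemma nbrs_insert_edge [simp]: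
  "nbrs (insert {p, q} F) u =
    (if u = p then {q} else {}) \<union> (if u = q then {p} else {}) \<union> nbrs F u"
  by (auto simp: nbrs_def doubleton_eq_iff)

lemma nbrs_Un: "nbrs (E \<union> F) u = nbrs E u \<union> nbrs F u"
  by (auto simp: nbrs_def)

lemma degree_Un_untouched:
  assumes "u \<notin> \<Union>F"
  shows "degree (E \<union> F) u = degree E u"
proof -
  have "nbrs F u = {}" using assms by (auto simp: nbrs_def)
  then show ?thesis by (simp add: degree_def nbrs_Un)
qed

lemma degree_Un:
  assumes "simple_graph V E" "\<forall>e\<in>F. \<not> e \<subseteq> V" "finite (\<Union>F)"
  shows "degree (E \<union> F) u = (if u \<in> V then degree E u else 0) + card (nbrs F u)"
proof -
  have "nbrs F u \<subseteq> \<Union>F" by (auto simp: nbrs_def)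
  then have fin: "finite (nbrs E u)" "finite (nbrs F u)"
    using simple_graph_finite_nbrs[OF assms(1)] assms(3) by (auto intro: finite_subset)
  show ?thesis
  proof (cases "u \<in> V")
    case True
    have "nbrs E u \<inter> nbrs F u = {}"
      using True assms(2) simple_graph_nbrs_subset[OF assms(1)] by fastforce
    then show ?thesis using True fin by (simp add: degree_def nbrs_Un card_Un_disjoint)
  next
    case False
    then have "nbrs E u = {}" using simple_graph_nbrs_outside[OF assms(1)] by blast
    then show ?thesis using False by (simp add: degree_def nbrs_Un)
  qed
qed

lemma simple_graph_Un:
  assumes "simple_graph V E" "finite F" "\<forall>e\<in>F. card e = 2"
  shows "simple_graph (V \<union> \<Union>F) (E \<union> F)"
proof -
  have F2: "\<exists>u w. e = {u, w} \<and> u \<noteq> w" if "e \<in> F" for e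
    using assms(3) that by (simp add: card_2_iff)
  then have "finite e" if "e \<in> F" for e using that by force
  then have "finite (V \<union> \<Union>F)" using assms(1,2) by (simp add: simple_graph_def)
  moreover have "\<exists>u w. e = {u, w} \<and> u \<noteq> w \<and> u \<in> V \<union> \<Union>F \<and> w \<in> V \<union> \<Union>F"
    if "e \<in> E \<union> F" for e
    using that assms(1) F2 unfolding simple_graph_def by fast
  ultimately show ?thesis unfolding simple_graph_def by blast
qed

lemma min_degree_Un:
  assumes "\<forall>u\<in>V. 2 \<le> degree E u" "\<forall>u\<in>\<Union>F. 2 \<le> degree (E \<union> F) u"
  shows "\<forall>u\<in>V \<union> \<Union>F. 2 \<le> degree (E \<union> F) u"
  using assms degree_Un_untouched by (metis UnE)

section \<open>The invariant\<close>

definition no_3dvd_cycle :: "'a set \<Rightarrow> 'a set set \<Rightarrow> bool" where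
  "no_3dvd_cycle V E \<longleftrightarrow> (\<forall>cs. is_cycle V E cs \<longrightarrow> \<not> 3 dvd length cs)"

lemma closed_path_not_3dvd:
  assumes "no_3dvd_cycle V E" "is_path V E P" "{last P, hd P} \<in> E"
  shows "\<not> 3 dvd length P"
proof (cases "3 \<le> length P")
  case True
  then show ?thesis using assms by (auto simp: no_3dvd_cycle_def is_cycle_iff)
next
  case False
  moreover have "0 < length P" using assms(2) by (simp add: is_path_def)
  ultimately have "length P = 1 \<or> length P = 2" by linarith
  then show ?thesis by auto
qed

lemma no_3dvd_cycle_Un:
  assumes "no_3dvd_cycle V E" "\<forall>e\<in>F. \<not> e \<subseteq> V"
    "\<And>cs. is_cycle V' (E \<union> F) cs \<Longrightarrow> \<not> set cs \<subseteq> V \<Longrightarrow> \<not> 3 dvd length cs"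
  shows "no_3dvd_cycle V' (E \<union> F)"
  using assms is_cycle_restrict unfolding no_3dvd_cycle_def by metis

text \<open>Paths are lists of vertices, so a path P has length P - 1 edges.\<close>
definition no_3dvd_path :: "'a set \<Rightarrow> 'a set set \<Rightarrow> 'a \<Rightarrow> 'a \<Rightarrow> bool" where
  "no_3dvd_path V E s t \<longleftrightarrow>
    (\<forall>P. is_path V E P \<longrightarrow> hd P = s \<longrightarrow> last P = t \<longrightarrow> \<not> 3 dvd (length P - 1))"

lemma no_3dvd_path_sym: "no_3dvd_path V E s t \<Longrightarrow> no_3dvd_path V E t s"
  unfolding no_3dvd_path_def
  by (metis is_path_rev length_rev hd_rev last_rev)

definition terminals :: "'a set \<Rightarrow> 'a set set \<Rightarrow> 'a \<Rightarrow> 'a set" where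
  "terminals V E r = {u \<in> V. u \<noteq> r \<and> degree E u = 2}"

lemma terminals_Un:
  "terminals (V \<union> \<Union>F) (E \<union> F) r =
    (terminals V E r - \<Union>F) \<union> {u \<in> \<Union>F. u \<noteq> r \<and> degree (E \<union> F) u = 2}"
  unfolding terminals_def using degree_Un_untouched by fastforce

definition exceptional_invariant :: "'a set \<Rightarrow> 'a set set \<Rightarrow> 'a \<Rightarrow> bool" where
  "exceptional_invariant V E r \<longleftrightarrow>
    simple_graph V E \<and> r \<in> V \<and> (\<forall>u\<in>V. 2 \<le> degree E u) \<and> no_3dvd_cycle V E \<and>
    (\<exists>s t. s \<noteq> t \<and> terminals V E r = {s, t} \<and> ({s, t} \<notin> E \<longrightarrow> no_3dvd_path V E s t))"

lemma exceptional_invariantI: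
  assumes "simple_graph V E" "r \<in> V" "\<forall>u\<in>V. 2 \<le> degree E u" "no_3dvd_cycle V E"
    "terminals V E r = {s, t}" "s \<noteq> t" "{s, t} \<notin> E \<Longrightarrow> no_3dvd_path V E s t"
  shows "exceptional_invariant V E r"
  using assms unfolding exceptional_invariant_def by blast

locale exceptional_step =
  fixes V :: "'a set" and E :: "'a set set" and r x y :: 'a
  assumes invariant: "exceptional_invariant V E r" and terminals_xy: "terminals V E r = {x, y}"
begin

lemma simple: "simple_graph V E" and root: "r \<in> V" and min_degree: "\<forall>u\<in>V. 2 \<le> degree E u"
  and no_cycle: "no_3dvd_cycle V E"
  using invariant by (simp_all add: exceptional_invariant_def)

lemma terminal_x: "x \<in> V" "x \<noteq> r" "degree E x = 2"
  and terminal_y: "y \<in> V" "y \<noteq> r" "degree E y = 2"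
  using terminals_xy unfolding terminals_def by blast+

lemma x_ne_y: "x \<noteq> y" and no_3dvd_path_xy: "{x, y} \<notin> E \<Longrightarrow> no_3dvd_path V E x y"
proof -
  obtain s t where st: "s \<noteq> t" "{x, y} = {s, t}" "{s, t} \<notin> E \<longrightarrow> no_3dvd_path V E s t"
    using invariant terminals_xy unfolding exceptional_invariant_def by metis
  show "x \<noteq> y" using st by auto
  show "{x, y} \<notin> E \<Longrightarrow> no_3dvd_path V E x y"
    using st by (auto simp: doubleton_eq_iff intro: no_3dvd_path_sym)
qed

end

lemma exceptional_stepI:
  assumes "exceptional_invariant V E r" "x \<in> V" "y \<in> V" "distinct [r, x, y]"
    "degree E x = 2" "degree E y = 2"
  shows "exceptional_step V E r x y"
proof
  obtain s t where "terminals V E r = {s, t}"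
    using assms(1) unfolding exceptional_invariant_def by blast
  moreover have "x \<in> terminals V E r" "y \<in> terminals V E r"
    using assms(2-6) by (auto simp: terminals_def)
  ultimately show "terminals V E r = {x, y}" using assms(4) by auto
qed (rule assms(1))

section \<open>The base graph\<close>

lemma K23_bipartite:
  assumes "distinct [a1, a2, b1, b2, b3]"
  shows "\<forall>e\<in>K23_edges a1 a2 b1 b2 b3. \<exists>u w. e = {u, w} \<and> u \<in> {a1, a2} \<and> w \<notin> {a1, a2}"
  using assms unfolding K23_edges_def by auto

lemma K23_path_length:
  assumes "distinct [a1, a2, b1, b2, b3]" "is_path {a1, a2, b1, b2, b3} E P"
  shows "length P \<le> 5"
proof -
  have "length P = card (set P)" using assms(2) by (simp add: is_path_def distinct_card)
  also have "\<dots> \<le> card {a1, a2, b1, b2, b3}" using assms(2) by (intro card_mono) (auto simp: is_path_def)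
  finally show ?thesis using assms(1) by simp
qed

lemma K23_no_3dvd_cycle:
  assumes d: "distinct [a1, a2, b1, b2, b3]"
  shows "no_3dvd_cycle {a1, a2, b1, b2, b3} (K23_edges a1 a2 b1 b2 b3)"
  unfolding no_3dvd_cycle_def
proof (intro allI impI)
  let ?V = "{a1, a2, b1, b2, b3}" and ?E = "K23_edges a1 a2 b1 b2 b3" and ?A = "{a1, a2}"
  fix cs assume cs: "is_cycle ?V ?E cs"
  then have "is_path ?V ?E cs" "3 \<le> length cs" "{last cs, hd cs} \<in> ?E"
    by (auto simp: is_cycle_iff)
  moreover from this have "last cs \<in> ?A \<longleftrightarrow> hd cs \<notin> ?A"
    using K23_bipartite[OF d] by (fastforce simp: doubleton_eq_iff)
  ultimately have "even (length cs)" "length cs \<le> 5" "3 \<le> length cs"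
    using walk_bipartite_parity[OF _ _ K23_bipartite[OF d], of cs] K23_path_length[OF d]
    by (auto simp: is_path_def)
  then have "length cs = 4" by presburger
  then show "\<not> 3 dvd length cs" by simp
qed

lemma K23_no_3dvd_path:
  assumes d: "distinct [a1, a2, b1, b2, b3]"
    and st: "s \<in> {b1, b2, b3}" "t \<in> {b1, b2, b3}" "s \<noteq> t"
  shows "no_3dvd_path {a1, a2, b1, b2, b3} (K23_edges a1 a2 b1 b2 b3) s t"
  unfolding no_3dvd_path_def
proof (intro allI impI)
  fix P assume P: "is_path {a1, a2, b1, b2, b3} (K23_edges a1 a2 b1 b2 b3) P" "hd P = s" "last P = t"
  then have "odd (length P)"
    using walk_bipartite_parity[OF _ _ K23_bipartite[OF d], of P] st d by (auto simp: is_path_def)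
  moreover have "length P \<noteq> 1" using P st by (cases P) (auto simp: is_path_def)
  ultimately have "length P = 3 \<or> length P = 5" using K23_path_length[OF d P(1)] by presburger
  then show "\<not> 3 dvd (length P - 1)" by auto
qed

lemma K23_invariant:
  assumes d: "distinct [a1, a2, b1, b2, b3]" and r: "r \<in> {b1, b2, b3}"
  shows "exceptional_invariant {a1, a2, b1, b2, b3} (K23_edges a1 a2 b1 b2 b3) r"
proof -
  let ?V = "{a1, a2, b1, b2, b3}" and ?E = "K23_edges a1 a2 b1 b2 b3"
  have simple: "simple_graph ?V ?E"
    using d unfolding simple_graph_def K23_edges_def by auto
  have "nbrs ?E u = (if u \<in> {a1, a2} then {b1, b2, b3} else {a1, a2})" if "u \<in> ?V" for u
    using that d by (auto simp: K23_edges_def nbrs_def doubleton_eq_iff)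
  then have degree: "degree ?E u = (if u \<in> {a1, a2} then 3 else 2)" if "u \<in> ?V" for u
    using that d by (auto simp: degree_def)
  obtain s t where st: "{b1, b2, b3} - {r} = {s, t}" "s \<noteq> t" "s \<in> {b1, b2, b3}" "t \<in> {b1, b2, b3}"
    using r d by auto
  have "terminals ?V ?E r = {b1, b2, b3} - {r}"
    unfolding terminals_def using degree d by force
  then have "terminals ?V ?E r = {s, t}" using st(1) by simp
  moreover have "\<forall>u\<in>?V. 2 \<le> degree ?E u" using degree by simp
  moreover have "r \<in> ?V" using r by blast
  ultimately show ?thesis
    using exceptional_invariantI[OF simple _ _ K23_no_3dvd_cycle[OF d] _ st(2)
        K23_no_3dvd_path[OF d st(3,4,2)]]
    by blast
qed

section \<open>Adding a path of length 3\<close>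

lemma path3_no_3dvd_cycle:
  assumes simple: "simple_graph V E" and no_cycle: "no_3dvd_cycle V E"
    and no_path: "no_3dvd_path V E y x"
    and xy: "x \<in> V" "y \<in> V" and new: "a \<notin> V" "b \<notin> V" "a \<noteq> b"
  shows "no_3dvd_cycle (V \<union> {a, b}) (E \<union> {{x, a}, {a, b}, {b, y}})"
proof -
  define F where "F = {{x, a}, {a, b}, {b, y}}"
  let ?V = "V \<union> {a, b}"
  have fresh: "\<forall>e\<in>F. \<not> e \<subseteq> V" using new by (auto simp: F_def)
  have "a \<noteq> x" "a \<noteq> y" "b \<noteq> x" "b \<noteq> y" using new xy by auto
  then have nbrs_a: "nbrs (E \<union> F) a = {b, x}" and nbrs_b: "nbrs (E \<union> F) b = {a, y}"
    unfolding nbrs_Un simple_graph_nbrs_outside[OF simple new(1)]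
      simple_graph_nbrs_outside[OF simple new(2)]
    using new(3) by (simp_all add: F_def insert_commute)
  have "\<not> 3 dvd length cs" if cs: "is_cycle ?V (E \<union> F) cs" and outside: "\<not> set cs \<subseteq> V" for cs
  proof -
    have "a \<in> set cs"
    proof (rule ccontr)
      assume "a \<notin> set cs"
      moreover have "set cs \<subseteq> ?V" using cs by (simp add: is_cycle_iff is_path_def)
      ultimately have "b \<in> set cs" using outside by blast
      then obtain R where "is_path ?V (E \<union> F) R" "hd R = a" "set cs = insert b (set R)"
        using is_cycle_through_degree2[OF cs _ nbrs_b] by metis
      then show False using \<open>a \<notin> set cs\<close> by (auto simp: is_path_def)
    qed
    then obtain R where R: "is_path ?V (E \<union> F) R" "a \<notin> set R" "hd R = b" "last R = x"
      "length cs = Suc (length R)"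
      using is_cycle_through_degree2[OF cs _ nbrs_a] by metis
    then obtain Q where "R = b # Q" by (cases R) (auto simp: is_path_def)
    with R(4) xy new have Q: "R = b # Q" "Q \<noteq> []" by auto
    have Q_path: "is_path ?V (E \<union> F) Q" "b \<notin> set Q" "hd Q \<in> nbrs (E \<union> F) b"
      using R(1) Q by (simp_all add: is_path_Cons)
    have "hd Q \<noteq> a" using R(2) Q by auto
    then have "hd Q = y" using Q_path(3) nbrs_b by simp
    moreover have "set Q \<subseteq> V" using Q_path(1,2) R(2) Q(1) by (auto simp: is_path_def)
    ultimately have "\<not> 3 dvd (length Q - 1)"
      using no_path is_path_restrict[OF Q_path(1) _ fresh] R(4) Q by (simp add: no_3dvd_path_def)
    then show ?thesis using R(5) Q by simp presburger
  qed
  then show ?thesis unfolding F_def[symmetric] by (rule no_3dvd_cycle_Un[OF no_cycle fresh])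
qed

context exceptional_step
begin

lemma path3_invariant:
  assumes nonadj: "{x, y} \<notin> E" and new: "a \<notin> V" "b \<notin> V" "a \<noteq> b"
  shows "exceptional_invariant (V \<union> {a, b}) (E \<union> {{x, a}, {a, b}, {b, y}}) r"
proof -
  define F where "F = {{x, a}, {a, b}, {b, y}}"
  have ne: "a \<noteq> x" "a \<noteq> y" "b \<noteq> x" "b \<noteq> y" "a \<noteq> r" "b \<noteq> r"
    using terminal_x(1) terminal_y(1) root new by auto
  have V': "V \<union> {a, b} = V \<union> \<Union>F" using terminal_x(1) terminal_y(1) by (auto simp: F_def)
  have fresh: "\<forall>e\<in>F. \<not> e \<subseteq> V" using new by (auto simp: F_def)
  have "degree (E \<union> F) u = (if u \<in> V then degree E u else 0) + card (nbrs F u)" for u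
    by (rule degree_Un[OF simple fresh]) (simp add: F_def)
  then have degrees: "degree (E \<union> F) x = 3" "degree (E \<union> F) y = 3"
    "degree (E \<union> F) a = 2" "degree (E \<union> F) b = 2"
    using terminal_x terminal_y new ne x_ne_y by (simp_all add: F_def)
  then have min_degree': "\<forall>u\<in>V \<union> \<Union>F. 2 \<le> degree (E \<union> F) u"
    by (intro min_degree_Un[OF min_degree]) (auto simp: F_def)
  have terminals: "terminals (V \<union> \<Union>F) (E \<union> F) r = {a, b}"
    unfolding terminals_Un terminals_xy using degrees ne by (auto simp: F_def)
  have simple': "simple_graph (V \<union> \<Union>F) (E \<union> F)"
    by (rule simple_graph_Un[OF simple]) (use ne new in \<open>auto simp: F_def\<close>)
  have no_cycle': "no_3dvd_cycle (V \<union> \<Union>F) (E \<union> F)"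
    using path3_no_3dvd_cycle[OF simple no_cycle no_3dvd_path_sym[OF no_3dvd_path_xy[OF nonadj]]
        terminal_x(1) terminal_y(1) new]
    unfolding V' F_def .
  have "r \<in> V \<union> \<Union>F" using root by blast
  from exceptional_invariantI[OF simple' this min_degree' no_cycle' terminals new(3)]
  show ?thesis unfolding V' F_def by simp
qed

end

section \<open>Adding a twin\<close>

lemma is_cycle_merge_twin:
  assumes simple: "simple_graph V E" and w: "w \<in> V" "nbrs E w = {p, q}" and v: "v \<notin> V"
    and cs: "is_cycle (insert v V) (E \<union> {{v, p}, {v, q}}) cs" "w \<notin> set cs"
  shows "is_cycle V E (map (\<lambda>u. if u = v then w else u) cs)"
proof -
  define f where "f u = (if u = v then w else u)" for u
  have pq: "p \<in> V" "q \<in> V" using simple_graph_nbrsD[OF simple] w(2) by blast+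
  have "p \<in> nbrs E w" "q \<in> nbrs E w" using w(2) by simp_all
  then have wpq: "{w, p} \<in> E" "{w, q} \<in> E" by simp_all
  have "v \<noteq> p" "v \<noteq> q" using pq v by auto
  have cs_V: "set cs \<subseteq> insert v V" using cs(1) unfolding is_cycle_iff is_path_def by blast
  have edges: "{f u, f u'} \<in> E" if edge: "{u, u'} \<in> E \<union> {{v, p}, {v, q}}" for u u'
  proof -
    consider "{u, u'} \<in> E" | "{u, u'} = {v, p}" | "{u, u'} = {v, q}" using edge by blast
    then show ?thesis
    proof cases
      case 1
      then have "u \<noteq> v" "u' \<noteq> v" using simple_graph_edge[OF simple] v by blast+
      then show ?thesis using 1 by (simp add: f_def)
    qed (use wpq \<open>v \<noteq> p\<close> \<open>v \<noteq> q\<close> pq in \<open>auto simp: f_def doubleton_eq_iff insert_commute\<close>)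
  qed
  have "inj_on f (set cs)" using cs(2) by (auto simp: f_def inj_on_def)
  moreover have "f ` set cs \<subseteq> V" using cs_V w(1) by (auto simp: f_def)
  ultimately have "is_cycle V E (map f cs)" using edges by (rule is_cycle_map[OF cs(1)])
  then show ?thesis unfolding f_def .
qed

lemma twin_no_3dvd_cycle:
  assumes simple: "simple_graph V E" and no_cycle: "no_3dvd_cycle V E"
    and w: "w \<in> V" "nbrs E w = {p, q}" and v: "v \<notin> V"
  shows "no_3dvd_cycle (insert v V) (E \<union> {{v, p}, {v, q}})"
proof -
  define F where "F = {{v, p}, {v, q}}"
  have fresh: "\<forall>e\<in>F. \<not> e \<subseteq> V" using v by (auto simp: F_def)
  have pq: "p \<in> V" "q \<in> V" "p \<noteq> w" "q \<noteq> w"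
    using simple_graph_nbrsD[OF simple] w(2) by blast+
  then have "v \<noteq> p" "v \<noteq> q" using v by auto
  have "v \<noteq> w" using v w(1) by auto
  have nbrs_v: "nbrs (E \<union> F) v = {p, q}"
    unfolding nbrs_Un simple_graph_nbrs_outside[OF simple v] F_def
    using \<open>v \<noteq> p\<close> \<open>v \<noteq> q\<close> by (simp add: insert_commute)
  have nbrs_w: "nbrs (E \<union> F) w = {p, q}"
    unfolding nbrs_Un w(2) F_def using pq \<open>v \<noteq> w\<close> by simp
  have "\<not> 3 dvd length cs"
    if cs: "is_cycle (insert v V) (E \<union> F) cs" and outside: "\<not> set cs \<subseteq> V" for cs
  proof -
    have "v \<in> set cs" using cs outside by (auto simp: is_cycle_iff is_path_def)
    show ?thesis
    proof (cases "w \<in> set cs")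
      case True
      have "simple_graph (V \<union> \<Union>F) (E \<union> F)"
        by (rule simple_graph_Un[OF simple]) (use \<open>v \<noteq> p\<close> \<open>v \<noteq> q\<close> in \<open>auto simp: F_def\<close>)
      moreover have "V \<union> \<Union>F = insert v V" using pq by (auto simp: F_def)
      ultimately have "length cs = 4"
        using is_cycle_twins_length[OF _ cs \<open>v \<in> set cs\<close> True _ nbrs_v nbrs_w] v w(1) by auto
      then show ?thesis by simp
    next
      case False
      have "is_cycle V E (map (\<lambda>u. if u = v then w else u) cs)"
        using is_cycle_merge_twin[OF simple w v] cs False unfolding F_def by blast
      then show ?thesis using no_cycle unfolding no_3dvd_cycle_def by (metis length_map)
    qed
  qed
  then show ?thesis unfolding F_def[symmetric] by (rule no_3dvd_cycle_Un[OF no_cycle fresh])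
qed

lemma twin_no_3dvd_path:
  assumes simple: "simple_graph V E" and no_cycle: "no_3dvd_cycle V E"
    and w: "w \<in> V" "nbrs E w = {p, q}" and v: "v \<notin> V"
  shows "no_3dvd_path (insert v V) (E \<union> {{v, p}, {v, q}}) w v"
proof -
  define F where "F = {{v, p}, {v, q}}"
  have fresh: "\<forall>e\<in>F. \<not> e \<subseteq> V" using v by (auto simp: F_def)
  have "\<not> 3 dvd (length P - 1)"
    if P: "is_path (insert v V) (E \<union> F) P" "hd P = w" "last P = v" for P
  proof -
    have "P \<noteq> []" using P(1) by (simp add: is_path_def)
    then obtain Q where Q: "P = Q @ [v]" using P(3) by (metis append_butlast_last_id)
    have "Q \<noteq> []" using Q P(2) v w(1) by auto
    then have Q_path: "is_path (insert v V) (E \<union> F) Q" "v \<notin> set Q" "{last Q, v} \<in> E \<union> F"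
      using P(1) is_path_append[of Q "[v]"] Q by (simp_all add: is_path_Cons)
    have "set Q \<subseteq> V" using Q_path(1,2) by (auto simp: is_path_def)
    then have "is_path V E Q" using is_path_restrict[OF Q_path(1) _ fresh] by blast
    moreover have "last Q \<in> nbrs E w"
      using Q_path(3) simple_graph_edge[OF simple, of "last Q" v] v w(2)
      by (auto simp: F_def doubleton_eq_iff)
    moreover have "hd Q = w" using P(2) Q \<open>Q \<noteq> []\<close> by simp
    ultimately have "\<not> 3 dvd length Q"
      using closed_path_not_3dvd[OF no_cycle] by (simp add: insert_commute)
    then show ?thesis using Q by simp
  qed
  then show ?thesis by (simp add: no_3dvd_path_def F_def)
qed

context exceptional_step
begin

lemma twin_invariant:
  assumes adj: "{x, y} \<in> E" and v: "v \<notin> V"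
  shows "exceptional_invariant (insert v V) (E \<union> {{v, t} | t. t \<in> nbrs E x}) r"
proof -
  have "y \<in> nbrs E x" using adj by simp
  moreover have "card (nbrs E x) = 2" using terminal_x(3) by (simp add: degree_def)
  moreover have "\<exists>z. A = {y, z} \<and> z \<noteq> y" if "y \<in> A" "card A = 2" for A :: "'a set"
    using that unfolding card_2_iff by auto
  ultimately obtain z where z: "nbrs E x = {y, z}" "z \<noteq> y" by blast
  define F where "F = {{v, y}, {v, z}}"
  have E': "E \<union> {{v, t} | t. t \<in> nbrs E x} = E \<union> F" using z(1) by (auto simp: F_def)
  have z_nbr: "z \<in> V" "z \<noteq> x" using simple_graph_nbrsD[OF simple] z(1) by blast+
  have ne: "v \<noteq> y" "v \<noteq> z" "v \<noteq> x" "v \<noteq> r" using terminal_x(1) terminal_y(1) root v z_nbr by auto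
  have V': "insert v V = V \<union> \<Union>F" using terminal_y(1) z_nbr by (auto simp: F_def)
  have fresh: "\<forall>e\<in>F. \<not> e \<subseteq> V" using v by (auto simp: F_def)
  have "degree (E \<union> F) t = (if t \<in> V then degree E t else 0) + card (nbrs F t)" for t
    by (rule degree_Un[OF simple fresh]) (simp add: F_def)
  then have degrees: "degree (E \<union> F) y = 3" "degree (E \<union> F) z = Suc (degree E z)"
    "degree (E \<union> F) v = 2"
    using terminal_y ne z z_nbr v by (simp_all add: F_def)
  then have min_degree': "\<forall>t\<in>V \<union> \<Union>F. 2 \<le> degree (E \<union> F) t"
    using min_degree z_nbr(1) by (intro min_degree_Un[OF min_degree]) (auto simp: F_def)
  have terminals: "terminals (V \<union> \<Union>F) (E \<union> F) r = {x, v}"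
  proof -
    have F: "\<Union>F = {v, y, z}" by (auto simp: F_def)
    have "2 \<le> degree E z" using min_degree z_nbr(1) by blast
    then have new: "{t \<in> {v, y, z}. t \<noteq> r \<and> degree (E \<union> F) t = 2} = {v}"
      using degrees ne(4) by auto
    have "terminals (V \<union> \<Union>F) (E \<union> F) r = ({x, y} - {v, y, z}) \<union> {v}"
      using terminals_Un[of V F E r] unfolding terminals_xy F new .
    also have "\<dots> = {x, v}" using ne z_nbr(2) x_ne_y by auto
    finally show ?thesis .
  qed
  have simple': "simple_graph (V \<union> \<Union>F) (E \<union> F)"
    by (rule simple_graph_Un[OF simple]) (use ne in \<open>auto simp: F_def\<close>)
  have no_cycle': "no_3dvd_cycle (V \<union> \<Union>F) (E \<union> F)"
    using twin_no_3dvd_cycle[OF simple no_cycle terminal_x(1) z(1) v] unfolding V' F_def .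
  have no_path': "no_3dvd_path (V \<union> \<Union>F) (E \<union> F) x v"
    using twin_no_3dvd_path[OF simple no_cycle terminal_x(1) z(1) v] unfolding V' F_def .
  have "r \<in> V \<union> \<Union>F" using root by blast
  from exceptional_invariantI[OF simple' this min_degree' no_cycle' terminals ne(3)[symmetric] no_path']
  show ?thesis unfolding E' V' .
qed

end

section \<open>Attaching a 4-cycle\<close>

definition c4_edges :: "'a \<Rightarrow> 'a \<Rightarrow> 'a \<Rightarrow> 'a \<Rightarrow> 'a \<Rightarrow> 'a \<Rightarrow> 'a set set" where
  "c4_edges a b c d x y = {{a, b}, {b, c}, {c, d}, {d, a}, {a, x}, {c, y}}"

lemma c4_edges_reflect_ac: "c4_edges c b a d y x = c4_edges a b c d x y"
  by (auto simp: c4_edges_def)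

lemma c4_edges_reflect_bd: "c4_edges a d c b x y = c4_edges a b c d x y"
  by (auto simp: c4_edges_def)

locale c4_extension =
  fixes V :: "'a set" and E :: "'a set set" and a b c d x y :: 'a
  assumes simple: "simple_graph V E" and no_cycle: "no_3dvd_cycle V E"
    and xy: "x \<in> V" "y \<in> V" "{x, y} \<in> E"
    and fresh: "a \<notin> V" "b \<notin> V" "c \<notin> V" "d \<notin> V" and abcd: "distinct [a, b, c, d]"
begin

abbreviation "V' \<equiv> V \<union> {a, b, c, d}"
abbreviation "E' \<equiv> E \<union> c4_edges a b c d x y"

text \<open>
  The gadget is symmetric under swapping a with c and x with y, and under swapping b with d;
  these instances transfer statements about b and a to d and c.
\<close>

lemma reflect_ac: "c4_extension V E c b a d y x"
  using simple no_cycle xy fresh abcd by unfold_locales (auto simp: insert_commute)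

lemma reflect_bd: "c4_extension V E a d c b x y"
  using simple no_cycle xy fresh abcd by unfold_locales auto

lemma x_ne_y: "x \<noteq> y"
  using simple_graph_edge[OF simple xy(3)] by blast

lemma gadget_distinct: "a \<noteq> b" "a \<noteq> c" "a \<noteq> d" "b \<noteq> c" "b \<noteq> d" "c \<noteq> d"
  using abcd by auto

lemma gadget_not_in_V: "\<forall>e\<in>c4_edges a b c d x y. \<not> e \<subseteq> V"
  using fresh by (auto simp: c4_edges_def)

lemma nbrs_gadget:
  "nbrs E' a = {b, d, x}" "nbrs E' b = {a, c}" "nbrs E' c = {b, d, y}" "nbrs E' d = {a, c}"
  "nbrs E' x = nbrs E x \<union> {a}" "nbrs E' y = nbrs E y \<union> {c}"
proof -
  have "x \<noteq> a" "x \<noteq> b" "x \<noteq> c" "x \<noteq> d" "y \<noteq> a" "y \<noteq> b" "y \<noteq> c" "y \<noteq> d"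
    using xy fresh by auto
  with gadget_distinct x_ne_y show "nbrs E' a = {b, d, x}" "nbrs E' b = {a, c}" "nbrs E' c = {b, d, y}" "nbrs E' d = {a, c}"
    "nbrs E' x = nbrs E x \<union> {a}" "nbrs E' y = nbrs E y \<union> {c}"
    unfolding nbrs_Un c4_edges_def using simple_graph_nbrs_outside[OF simple] fresh
    by (simp_all add: insert_commute)
qed

lemma degree_gadget:
  "degree E' a = 3" "degree E' b = 2" "degree E' c = 3" "degree E' d = 2"
  "degree E' x = Suc (degree E x)" "degree E' y = Suc (degree E y)"
proof -
  have "finite (nbrs E u)" for u using simple_graph_finite_nbrs[OF simple] .
  moreover have "x \<noteq> b" "x \<noteq> d" "y \<noteq> b" "y \<noteq> d" using xy fresh by auto
  moreover have "a \<notin> nbrs E x" "c \<notin> nbrs E y"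
    using fresh simple_graph_nbrs_subset[OF simple] by blast+
  ultimately show "degree E' a = 3" "degree E' b = 2" "degree E' c = 3" "degree E' d = 2"
    "degree E' x = Suc (degree E x)" "degree E' y = Suc (degree E y)"
    unfolding degree_def nbrs_gadget using gadget_distinct fresh by auto
qed

lemma gadget_exit:
  assumes P: "is_path V' E' P" "hd P = x" "a \<notin> set P" "b \<notin> set P" "last P \<in> {c, d}"
  obtains Q where "is_path V E Q" "hd Q = x" "last Q = y" "P = Q @ [c] \<or> P = Q @ [c, d]"
proof -
  have "P \<noteq> []" using P(1) by (simp add: is_path_def)
  then have "\<exists>n\<in>set P. n \<notin> V" using P(5) fresh last_in_set by blast
  then obtain Q n rest where split: "P = Q @ n # rest" "n \<notin> V" "\<forall>q\<in>set Q. q \<in> V"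
    using split_list_first_prop[of P "\<lambda>n. n \<notin> V"] by blast
  have "Q \<noteq> []" using split P(2) xy(1) by (cases Q) auto
  have Q: "is_path V' E' Q" "last Q \<in> nbrs E' n" and rest: "is_path V' E' (n # rest)"
    and disjoint: "set Q \<inter> set (n # rest) = {}"
    using P(1) is_path_append[OF \<open>Q \<noteq> []\<close>, of "n # rest"] split(1)
    by (simp_all add: insert_commute)
  have "n \<in> {c, d}" using rest P(3,4) split(1,2) by (auto simp: is_path_def)
  moreover have "last Q \<in> V" using split(3) \<open>Q \<noteq> []\<close> by simp
  ultimately have n: "n = c" "last Q = y" using Q(2) nbrs_gadget fresh by auto
  have "is_path V E Q" using is_path_restrict[OF Q(1) _ gadget_not_in_V] split(3) by blast
  moreover have "hd Q = x" using P(2) split(1) \<open>Q \<noteq> []\<close> by simp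
  moreover have "rest = [] \<or> rest = [d]"
  proof (cases rest)
    case (Cons t rest')
    have "is_path V' E' (c # t # rest')" using rest unfolding n(1) Cons .
    then have "t \<in> nbrs E' c" unfolding nbrs_iff by (rule is_path_Cons_Cons_edge)
    moreover have "t \<noteq> b" using P(4) split(1) Cons by auto
    moreover have "y \<in> set Q" using n(2) last_in_set[OF \<open>Q \<noteq> []\<close>] by simp
    then have "t \<noteq> y" using disjoint Cons by auto
    ultimately have "t = d" using nbrs_gadget by simp
    moreover have "last (t # rest') = d"
      using P(5) split(1) n(1) rest Cons by (auto simp: is_path_def)
    moreover have "distinct (t # rest')" using rest Cons by (simp add: is_path_def)
    ultimately have "t # rest' = [d]" using distinct_hd_eq_last[of "t # rest'"] by simp
    then show ?thesis using Cons by simp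
  qed simp
  ultimately show thesis using that n split(1) by auto
qed

lemma path_from_a_cases:
  assumes P: "is_path V' E' (a # P)" "b \<notin> set P" "last (a # P) \<in> {c, d}"
  obtains "P = [d]" | "P = [d, c]"
    | Q where "is_path V E Q" "hd Q = x" "last Q = y" "P = Q @ [c] \<or> P = Q @ [c, d]"
proof -
  have "P \<noteq> []" using P(3) gadget_distinct by auto
  then have last: "last P \<in> {c, d}" using P(3) by simp
  obtain t P' where tP: "P = t # P'" using \<open>P \<noteq> []\<close> by (cases P) auto
  have "{a, t} \<in> E'" using P(1) unfolding tP by (rule is_path_Cons_Cons_edge)
  then have "t \<in> nbrs E' a" by simp
  moreover have "t \<noteq> b" using P(2) tP by auto
  ultimately have "t = d \<or> t = x" using nbrs_gadget by simp
  then show thesis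
  proof
    assume "t = d"
    have dist: "distinct (d # P')" "a \<notin> set (d # P')"
      using P(1) tP \<open>t = d\<close> by (simp_all add: is_path_def)
    show thesis
    proof (cases "last P = d")
      case True
      then have "P = [d]" using distinct_hd_eq_last[OF dist(1)] tP \<open>t = d\<close> by simp
      then show thesis using that by simp
    next
      case False
      then have "last P = c" "P' \<noteq> []" using last tP \<open>t = d\<close> by auto
      then obtain t' P'' where t'P: "P' = t' # P''" by (cases P') auto
      have "is_path V' E' (d # t' # P'')" using P(1) tP t'P \<open>t = d\<close> by (simp add: is_path_Cons)
      then have "{d, t'} \<in> E'" by (rule is_path_Cons_Cons_edge)
      then have "t' \<in> nbrs E' d" by simp
      then have "t' = c" using dist(2) t'P nbrs_gadget by auto
      moreover have "distinct (t' # P'')" "last (t' # P'') = c"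
        using dist(1) t'P \<open>last P = c\<close> tP by auto
      ultimately have "P = [d, c]" using distinct_hd_eq_last[of "t' # P''"] tP t'P \<open>t = d\<close> by simp
      then show thesis using that by simp
    qed
  next
    assume "t = x"
    have "is_path V' E' P" "a \<notin> set P" using P(1) by (simp_all add: is_path_Cons \<open>P \<noteq> []\<close>)
    then show thesis
      using gadget_exit[of P] that(3) P(2) last tP \<open>t = x\<close> by auto
  qed
qed

lemma x_y_path_not_3dvd: "is_path V E Q \<Longrightarrow> hd Q = x \<Longrightarrow> last Q = y \<Longrightarrow> \<not> 3 dvd length Q"
  using closed_path_not_3dvd[OF no_cycle] xy(3) by (simp add: insert_commute)

lemma path_b_a_not_3dvd:
  assumes "is_path V' E' (b # a # P)" "last (a # P) = d"
  shows "\<not> 3 dvd (length (b # a # P) - 1)"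
proof -
  have "is_path V' E' (a # P)" "b \<notin> set P" "last (a # P) \<in> {c, d}"
    using assms by (auto simp: is_path_def)
  then show ?thesis
  proof (cases rule: path_from_a_cases)
    case (3 Q)
    moreover have "last (a # P) \<noteq> c" using assms(2) gadget_distinct by simp
    ultimately have "P = Q @ [c, d]" by auto
    then show ?thesis using x_y_path_not_3dvd[OF 3(1-3)] by simp presburger
  next
    case 1
    then show ?thesis by (simp; presburger)
  next
    case 2
    then show ?thesis using assms(2) gadget_distinct by simp
  qed
qed

lemma cycle_b_a_not_3dvd:
  assumes "is_path V' E' (a # P)" "b \<notin> set (a # P)" "last (a # P) = c"
  shows "\<not> 3 dvd length (b # a # P)"
proof -
  have "b \<notin> set P" "last (a # P) \<in> {c, d}" using assms(2,3) by auto
  with assms(1) show ?thesis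
  proof (cases rule: path_from_a_cases)
    case (3 Q)
    moreover have "last (a # P) \<noteq> d" using assms(3) gadget_distinct by simp
    ultimately have "P = Q @ [c]" by auto
    then show ?thesis using x_y_path_not_3dvd[OF 3(1-3)] by simp presburger
  next
    case 1
    then show ?thesis using assms(3) gadget_distinct by simp
  next
    case 2
    then show ?thesis by (simp; presburger)
  qed
qed

lemma no_3dvd_cycle_extension: "no_3dvd_cycle V' E'"
proof -
  have "\<not> 3 dvd length cs" if cs: "is_cycle V' E' cs" and outside: "\<not> set cs \<subseteq> V" for cs
  proof -
    consider "b \<in> set cs" | "d \<in> set cs" | "b \<notin> set cs" "d \<notin> set cs" by blast
    then show ?thesis
    proof cases
      case 1
      then obtain R where R: "is_path V' E' R" "b \<notin> set R" "hd R = a" "last R = c"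
        "length cs = Suc (length R)"
        using is_cycle_through_degree2[OF cs _ nbrs_gadget(2)] by metis
      then obtain P where "R = a # P" by (cases R) (auto simp: is_path_def)
      then show ?thesis using cycle_b_a_not_3dvd[of P] R by simp
    next
      case 2
      then obtain R where R: "is_path V' E' R" "d \<notin> set R" "hd R = a" "last R = c"
        "length cs = Suc (length R)"
        using is_cycle_through_degree2[OF cs _ nbrs_gadget(4)] by metis
      then obtain P where "R = a # P" by (cases R) (auto simp: is_path_def)
      moreover have "V \<union> {a, d, c, b} = V'" by auto
      ultimately show ?thesis
        using c4_extension.cycle_b_a_not_3dvd[OF reflect_bd, of P] R
        unfolding c4_edges_reflect_bd[of a b c d x y] by simp
    next
      case 3
      obtain u where u: "u \<in> set cs" "u \<in> {a, c}"
        using outside 3 cs by (auto simp: is_cycle_iff is_path_def)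
      then obtain R where R: "hd R \<in> nbrs E' u" "last R \<in> nbrs E' u" "hd R \<noteq> last R"
        "set cs = insert u (set R)" "R \<noteq> []"
        using is_cycle_through[OF cs u(1)] by (metis is_path_def)
      then have "hd R \<in> set cs" "last R \<in> set cs" by auto
      then have "hd R \<in> nbrs E' u - {b, d}" "last R \<in> nbrs E' u - {b, d}"
        using R(1,2) 3 by blast+
      moreover have "x \<noteq> b" "x \<noteq> d" "y \<noteq> b" "y \<noteq> d" using xy fresh by auto
      then have "nbrs E' u - {b, d} = (if u = a then {x} else {y})"
        using u(2) nbrs_gadget(1,3) by auto
      ultimately show ?thesis using R(3) by (simp split: if_splits)
    qed
  qed
  then show ?thesis by (rule no_3dvd_cycle_Un[OF no_cycle gadget_not_in_V])
qed

lemma no_3dvd_path_b_d: "no_3dvd_path V' E' b d"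
proof -
  have "\<not> 3 dvd (length P - 1)" if P: "is_path V' E' P" "hd P = b" "last P = d" for P
  proof -
    obtain P1 where P1: "P = b # P1" using P(1,2) by (cases P) (auto simp: is_path_def)
    then have "P1 \<noteq> []" using P(3) gadget_distinct by auto
    then obtain t P2 where tP: "P1 = t # P2" by (cases P1) auto
    have "{b, t} \<in> E'" using P(1) unfolding P1 tP by (rule is_path_Cons_Cons_edge)
    then have "t \<in> nbrs E' b" by simp
    then have "t = a \<or> t = c" unfolding nbrs_gadget(2) by simp
    then show ?thesis
    proof
      assume "t = a"
      then show ?thesis using path_b_a_not_3dvd[of P2] P(1,3) P1 tP by simp
    next
      assume "t = c"
      moreover have "V \<union> {c, b, a, d} = V'" by auto
      ultimately show ?thesis
        using c4_extension.path_b_a_not_3dvd[OF reflect_ac, of P2] P(1,3) P1 tP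
        unfolding c4_edges_reflect_ac[of a b c d x y] by simp
    qed
  qed
  then show ?thesis by (simp add: no_3dvd_path_def)
qed

end

context exceptional_step
begin

lemma c4_invariant:
  assumes adj: "{x, y} \<in> E" and abcd: "distinct [a, b, c, d]"
    and fresh: "a \<notin> V" "b \<notin> V" "c \<notin> V" "d \<notin> V"
  shows "exceptional_invariant (V \<union> {a, b, c, d})
    (E \<union> {{a, b}, {b, c}, {c, d}, {d, a}, {a, x}, {c, y}}) r"
proof -
  interpret gadget: c4_extension V E a b c d x y
    using simple no_cycle terminal_x(1) terminal_y(1) adj abcd fresh by unfold_locales
  define F where "F = c4_edges a b c d x y"
  have F: "\<Union>F = {a, b, c, d, x, y}" by (auto simp: F_def c4_edges_def)
  have V': "V \<union> {a, b, c, d} = V \<union> \<Union>F" using terminal_x(1) terminal_y(1) F by auto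
  have ne: "x \<noteq> a" "x \<noteq> b" "x \<noteq> c" "x \<noteq> d" "y \<noteq> a" "y \<noteq> b" "y \<noteq> c" "y \<noteq> d"
    "r \<noteq> a" "r \<noteq> b" "r \<noteq> c" "r \<noteq> d"
    using root terminal_x(1) terminal_y(1) fresh by auto
  have degrees: "degree (E \<union> F) x = 3" "degree (E \<union> F) y = 3"
    "degree (E \<union> F) a = 3" "degree (E \<union> F) c = 3"
    "degree (E \<union> F) b = 2" "degree (E \<union> F) d = 2"
    using gadget.degree_gadget terminal_x(3) terminal_y(3) unfolding F_def by simp_all
  then have min_degree': "\<forall>u\<in>V \<union> \<Union>F. 2 \<le> degree (E \<union> F) u"
    by (intro min_degree_Un[OF min_degree]) (auto simp: F)
  have "{u \<in> {a, b, c, d, x, y}. u \<noteq> r \<and> degree (E \<union> F) u = 2} = {b, d}"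
    using degrees ne by auto
  then have terminals: "terminals (V \<union> \<Union>F) (E \<union> F) r = {b, d}"
    using terminals_Un[of V F E r] unfolding terminals_xy F by auto
  have simple': "simple_graph (V \<union> \<Union>F) (E \<union> F)"
    by (rule simple_graph_Un[OF simple])
      (use ne gadget.gadget_distinct in \<open>auto simp: F_def c4_edges_def\<close>)
  have no_cycle': "no_3dvd_cycle (V \<union> \<Union>F) (E \<union> F)"
    using gadget.no_3dvd_cycle_extension unfolding V' F_def .
  have no_path': "no_3dvd_path (V \<union> \<Union>F) (E \<union> F) b d"
    using gadget.no_3dvd_path_b_d unfolding V' F_def .
  have E': "E \<union> {{a, b}, {b, c}, {c, d}, {d, a}, {a, x}, {c, y}} = E \<union> F"
    by (simp add: F_def c4_edges_def)
  have "r \<in> V \<union> \<Union>F" using root by blast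
  from exceptional_invariantI[OF simple' this min_degree' no_cycle' terminals
      gadget.gadget_distinct(5) no_path']
  show ?thesis unfolding E' V' .
qed

end

lemma exc_seq_invariant:
  assumes "exc_seq V E r" "r \<in> V" "degree E r = 2"
  shows "exceptional_invariant V E r"
  using assms
proof (induction rule: exc_seq.induct)
  case (base a1 a2 b1 b2 b3 r)
  have "nbrs (K23_edges a1 a2 b1 b2 b3) u = {b1, b2, b3}" if "u \<in> {a1, a2}" for u
    using that base(1) by (auto simp: K23_edges_def nbrs_def doubleton_eq_iff)
  then have "r \<in> {b1, b2, b3}" using base by (auto simp: degree_def)
  then show ?case using K23_invariant[OF base(1)] by blast
next
  case (path3 V E r x y a b)
  have "exceptional_step V E r x y"
    using exceptional_stepI[OF path3.IH[OF path3.hyps(2,6)]] path3.hyps(3-5,7,8) .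
  then show ?case using path3.hyps(9-12) by (rule exceptional_step.path3_invariant)
next
  case (twin V E r x y w v)
  have inv: "exceptional_invariant V E r" using twin.IH twin.hyps(2,6) .
  from \<open>w \<in> {x, y}\<close> show ?case
  proof
    assume "w = x"
    have "exceptional_step V E r x y"
      using exceptional_stepI[OF inv] twin.hyps(3-5,7,8) .
    then show ?case
      unfolding \<open>w = x\<close> by (rule exceptional_step.twin_invariant[OF _ twin.hyps(9,11)])
  next
    assume "w \<in> {y}"
    have "distinct [r, y, x]" "{y, x} \<in> E" using twin.hyps(5,9) by (auto simp: insert_commute)
    then have "exceptional_step V E r y x"
      using exceptional_stepI[OF inv twin.hyps(4,3) _ twin.hyps(8,7)] by blast
    moreover have "w = y" using \<open>w \<in> {y}\<close> by simp
    ultimately show ?case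
      by (simp only:) (rule exceptional_step.twin_invariant[OF _ \<open>{y, x} \<in> E\<close> twin.hyps(11)])
  qed
next
  case (cycle4 V E r x y a b c d)
  have "exceptional_step V E r x y"
    using exceptional_stepI[OF cycle4.IH[OF cycle4.hyps(2,6)]] cycle4.hyps(3-5,7,8) .
  then show ?case using cycle4.hyps(9-14) by (rule exceptional_step.c4_invariant)
qed

theorem lemma3p3:
  fixes V :: "'a set" and E :: "'a set set"
  assumes "exceptional V E"
  shows "\<not> (\<exists>cs. is_cycle V E cs \<and> 3 dvd length cs)"
proof -
  obtain r where "exc_seq V E r" "r \<in> V" "degree E r = 2"
    using assms unfolding exceptional_def exceptional_root_def by blast
  then have "exceptional_invariant V E r" by (rule exc_seq_invariant)
  then have "no_3dvd_cycle V E" by (simp add: exceptional_invariant_def)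
  then show ?thesis by (simp add: no_3dvd_cycle_def)
qed

end
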